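(* Let $S=\{1,2\}$ and let $\mathcal{F}$ be the family of finite disjoint unions of $S$-colored chains whose colors alternate along the chain. For $i\in S$, $n\ge1$, let $L(i,n)$ be the alternating chain with $n$ elements whose maximal element (root) is colored $i$. Then in $\mathfrak{n}_{\mathcal{F}}$ with bracket $[x,y]=x\rhd y-y\rhd x$: $[\delta_{L(i,2k)},\delta_{L(j,2l)}]=0$; $[\delta_{L(i,2k)},\delta_{L(j,2l+1)}]=-\delta_{L(j,2(k+l)+1)}$ if $i=j$ and $=\delta_{L(j,2(k+l)+1)}$ if $i\ne j$; $[\delta_{L(i,2k+1)},\delta_{L(j,2l+1)}]=\delta_{L(j,2(k+l+1))}-\delta_{L(i,2(k+l+1))}$. Moreover the linear map $\phi:\mathfrak{n}_{\mathcal{F}}\to L\mathfrak{gl}_2^+$ given by $\phi(\delta_{L(1,2k+1)})=e\otimes t^k$, $\phi(\delta_{L(2,2k+1)})=f\otimes t^{k+1}$ $(k\ge0)$, $\phi(\delta_{L(1,2k)})=-h_1\otimes t^k$, $\phi(\delta_{L(2,2k)})=-h_2\otimes t^k$ $(k\ge1)$ is an isomorphism of Lie algebras.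
   Context: $\mathfrak{n}_{\mathcal{F}}$ is the $\mathbb{Q}$-vector space with basis $\delta_P$, $P$ ranging over isomorphism classes of connected members of $\mathcal{F}$, with product $\delta_a\rhd\delta_b=\sum_{t} n(a,b,t)\delta_t$ (sum over connected $t\in\mathcal{F}$ up to isomorphism), where $n(a,b,t)$ is the number of covering relations $x\lessdot y$ in $t$ such that $\{z\in t: z\le x\}\cong a$ and its complement $\cong b$ as colored posets (i.e. the number of ways $t$ is obtained by grafting the maximal element (root) of $a$ directly below an element of $b$). In $\mathfrak{gl}_2$ over $\mathbb{Q}$: $e=E_{1,2}$, $f=E_{2,1}$, $h_1=E_{1,1}$, $h_2=E_{2,2}$. $L\mathfrak{gl}_2=\mathfrak{gl}_2\otimes\mathbb{Q}[t,t^{-1}]$ with $[X\otimes t^m,Y\otimes t^n]=[X,Y]\otimes t^{m+n}$, and $L\mathfrak{gl}_2^+=\mathbb{Q}e\oplus(\mathfrak{gl}_2\otimes t\mathbb{Q}[t])$. *)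

theory Defs
  imports "HOL-Analysis.Analysis"
begin

type_synonym cposet = "nat set \<times> (nat \<Rightarrow> nat \<Rightarrow> bool) \<times> (nat \<Rightarrow> nat)"

definition cp_carrier :: "cposet \<Rightarrow> nat set" where "cp_carrier P = fst P"
definition cp_le :: "cposet \<Rightarrow> nat \<Rightarrow> nat \<Rightarrow> bool" where "cp_le P = fst (snd P)"
definition cp_col :: "cposet \<Rightarrow> nat \<Rightarrow> nat" where "cp_col P = snd (snd P)"

definition cp_restr :: "cposet \<Rightarrow> nat set \<Rightarrow> cposet" where
  "cp_restr P S = (S, cp_le P, cp_col P)"

definition cp_iso :: "cposet \<Rightarrow> cposet \<Rightarrow> bool" where
  "cp_iso P Q \<longleftrightarrow> (\<exists>g. bij_betw g (cp_carrier P) (cp_carrier Q) \<and>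
     (\<forall>x\<in>cp_carrier P. \<forall>y\<in>cp_carrier P. cp_le P x y \<longleftrightarrow> cp_le Q (g x) (g y)) \<and>
     (\<forall>x\<in>cp_carrier P. cp_col P x = cp_col Q (g x)))"

definition cp_covers :: "cposet \<Rightarrow> nat \<Rightarrow> nat \<Rightarrow> bool" where
  "cp_covers P x y \<longleftrightarrow> x \<in> cp_carrier P \<and> y \<in> cp_carrier P \<and> cp_le P x y \<and> x \<noteq> y \<and>
     \<not> (\<exists>z\<in>cp_carrier P. cp_le P x z \<and> cp_le P z y \<and> z \<noteq> x \<and> z \<noteq> y)"

definition cp_down :: "cposet \<Rightarrow> nat \<Rightarrow> nat set" where
  "cp_down P x = {z \<in> cp_carrier P. cp_le P z x}"

definition ngraft :: "cposet \<Rightarrow> cposet \<Rightarrow> cposet \<Rightarrow> nat" where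
  "ngraft a b t = card {(x, y). cp_covers t x y \<and>
       cp_iso (cp_restr t (cp_down t x)) a \<and>
       cp_iso (cp_restr t (cp_carrier t - cp_down t x)) b}"

definition other_col :: "nat \<Rightarrow> nat" where "other_col i = 3 - i"

definition Lch :: "nat \<Rightarrow> nat \<Rightarrow> cposet" where
  "Lch i n = ({0..<n}, (\<le>), (\<lambda>k. if even (n - 1 - k) then i else other_col i))"

text \<open>Index set of the basis of n_F: isomorphism classes of connected members of F,
  represented by the chains L(i,n), i in {1,2}, n \<ge> 1.\<close>
definition Idx :: "(nat \<times> nat) set" where
  "Idx = {(i, n). i \<in> {1, 2} \<and> 1 \<le> n}"

definition Lp :: "nat \<times> nat \<Rightarrow> cposet" where "Lp p = Lch (fst p) (snd p)"

definition supp :: "('a \<Rightarrow> 'b::zero) \<Rightarrow> 'a set" where "supp x = {p. x p \<noteq> 0}"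

definition nF :: "(nat \<times> nat \<Rightarrow> rat) set" where
  "nF = {x. finite (supp x) \<and> supp x \<subseteq> Idx}"

definition delta :: "nat \<times> nat \<Rightarrow> nat \<times> nat \<Rightarrow> rat" where
  "delta q = (\<lambda>p. if p = q then 1 else 0)"

definition prelie :: "(nat \<times> nat \<Rightarrow> rat) \<Rightarrow> (nat \<times> nat \<Rightarrow> rat) \<Rightarrow> (nat \<times> nat \<Rightarrow> rat)" where
  "prelie x y = (\<lambda>t. if t \<in> Idx then
      (\<Sum>a\<in>supp x. \<Sum>b\<in>supp y. x a * y b * of_nat (ngraft (Lp a) (Lp b) (Lp t))) else 0)"

definition nbracket :: "(nat \<times> nat \<Rightarrow> rat) \<Rightarrow> (nat \<times> nat \<Rightarrow> rat) \<Rightarrow> (nat \<times> nat \<Rightarrow> rat)" where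
  "nbracket x y = (\<lambda>t. prelie x y t - prelie y x t)"

definition Emat :: "2 \<Rightarrow> 2 \<Rightarrow> rat^2^2" where
  "Emat i j = (\<chi> a b. if a = i \<and> b = j then 1 else 0)"

definition e_gl :: "rat^2^2" where "e_gl = Emat 1 2"
definition f_gl :: "rat^2^2" where "f_gl = Emat 2 1"
definition h1_gl :: "rat^2^2" where "h1_gl = Emat 1 1"
definition h2_gl :: "rat^2^2" where "h2_gl = Emat 2 2"

definition smat :: "rat \<Rightarrow> rat^2^2 \<Rightarrow> rat^2^2" where
  "smat c M = (\<chi> a b. c * M $ a $ b)"

text \<open>An element of L gl_2 is X :: int \<Rightarrow> gl_2 with finite support,
  standing for sum_m X m \<otimes> t^m.\<close>
definition Lgl2 :: "(int \<Rightarrow> rat^2^2) set" where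
  "Lgl2 = {X. finite (supp X)}"

definition Lbracket :: "(int \<Rightarrow> rat^2^2) \<Rightarrow> (int \<Rightarrow> rat^2^2) \<Rightarrow> (int \<Rightarrow> rat^2^2)" where
  "Lbracket X Y = (\<lambda>m. \<Sum>p\<in>supp X. X p ** Y (m - p) - Y (m - p) ** X p)"

definition Lgl2plus :: "(int \<Rightarrow> rat^2^2) set" where
  "Lgl2plus = {X \<in> Lgl2. (\<forall>m<0. X m = 0) \<and> (\<exists>c. X 0 = smat c e_gl)}"

definition single_loop :: "int \<Rightarrow> rat^2^2 \<Rightarrow> (int \<Rightarrow> rat^2^2)" where
  "single_loop m M = (\<lambda>p. if p = m then M else 0)"

definition phib :: "nat \<times> nat \<Rightarrow> (int \<Rightarrow> rat^2^2)" where
  "phib p = (let i = fst p; n = snd p in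
     if odd n then
       (if i = 1 then single_loop (int ((n - 1) div 2)) e_gl
        else single_loop (int ((n - 1) div 2) + 1) f_gl)
     else
       (if i = 1 then single_loop (int (n div 2)) (- h1_gl)
        else single_loop (int (n div 2)) (- h2_gl)))"

definition phi :: "(nat \<times> nat \<Rightarrow> rat) \<Rightarrow> (int \<Rightarrow> rat^2^2)" where
  "phi x = (\<lambda>m. \<Sum>a\<in>supp x. smat (x a) (phib a m))"

end

theory Submission
  imports Defs
begin

(*
  Every connected member of the family is an alternating chain L(i,n),
  so the pre-Lie product is governed by one combinatorial count: grafting L(i,p)
  below the root of L(j,q) can only produce L(j,p+q), and does so exactly once when
  the colours still alternate, i.e. when (q even <-> i = j) (lemma ngraft_Lch).
  The three bracket formulas follow by antisymmetrising this structure constant.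

  For the isomorphism we describe phi in coordinates: phi x at degree m is the
  2x2 matrix phi_coords x m whose four entries are single coefficients of x
  (lemma phi_eq_coords).  Linearity is then entrywise, and an explicit inverse
  coords_inv shows that phi is a bijection from n_F onto L gl_2^+.  Finally both
  sides of the homomorphism property are bilinear, so it suffices to check it on
  basis vectors, where it reduces to the bracket formulas and to commutators of
  matrix units in gl_2.
*)

section \<open>Alternating chains\<close>

lemma other_col_simps [simp]: "other_col 1 = 2" "other_col 2 = 1" "other_col (Suc 0) = 2"
  by (simp_all add: other_col_def)

lemma Lch_parts [simp]: "cp_carrier (Lch i n) = {0..<n}" "cp_le (Lch i n) = (\<le>)"
  by (simp_all add: Lch_def cp_carrier_def cp_le_def)

lemma Lch_col: "cp_col (Lch i n) z = (if even (n - 1 - z) then i else other_col i)"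
  by (simp add: Lch_def cp_col_def)

lemma restr_parts [simp]:
  "cp_carrier (cp_restr P S) = S" "cp_le (cp_restr P S) = cp_le P" "cp_col (cp_restr P S) = cp_col P"
  by (simp_all add: cp_restr_def cp_carrier_def cp_le_def cp_col_def)

lemma Lch_col_below:
  assumes k: "k \<in> {1,2}" and "x \<le> y" "y < n"
  shows "cp_col (Lch k n) x =
    (if even (y - x) then cp_col (Lch k n) y else other_col (cp_col (Lch k n) y))"
proof -
  have "n - 1 - x = (n - 1 - y) + (y - x)" using assms by simp
  then show ?thesis using k unfolding Lch_col by auto
qed

lemma interval_iso_Lch:
  assumes k: "k \<in> {1,2}" and sm: "s + m \<le> n" and m: "1 \<le> m"
  shows "cp_iso (cp_restr (Lch k n) {s..<s+m}) (Lch i m') \<longleftrightarrow>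
         (m' = m \<and> cp_col (Lch k n) (s+m-1) = i)"
proof
  assume "cp_iso (cp_restr (Lch k n) {s..<s+m}) (Lch i m')"
  then obtain g where bij: "bij_betw g {s..<s+m} {0..<m'}"
    and ord: "\<forall>x\<in>{s..<s+m}. \<forall>y\<in>{s..<s+m}. x \<le> y \<longleftrightarrow> g x \<le> g y"
    and col: "\<forall>x\<in>{s..<s+m}. cp_col (Lch k n) x = cp_col (Lch i m') (g x)"
    unfolding cp_iso_def restr_parts Lch_parts by blast
  have mm: "m' = m" using bij_betw_same_card[OF bij] by simp
  have top: "s+m-1 \<in> {s..<s+m}" using m by auto
  text \<open>An order isomorphism maps the top element to the top element.\<close>
  have "g (s+m-1) = m - 1"
  proof -
    have "m - 1 \<in> {0..<m'}" using m mm by auto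
    then obtain z where z: "z \<in> {s..<s+m}" "g z = m - 1"
      using bij by (metis bij_betw_def imageE)
    then have "z \<le> s+m-1" by auto
    then have "g z \<le> g (s+m-1)" using ord z(1) top by blast
    moreover have "g (s+m-1) \<in> {0..<m}" using bij top mm by (auto dest: bij_betw_apply)
    ultimately show ?thesis using z by simp
  qed
  moreover have "cp_col (Lch i m') (m - 1) = i" using mm by (simp add: Lch_col)
  ultimately show "m' = m \<and> cp_col (Lch k n) (s+m-1) = i"
    using col top mm by metis
next
  assume h: "m' = m \<and> cp_col (Lch k n) (s+m-1) = i"
  have bij: "bij_betw (\<lambda>z. z - s) {s..<s+m} {0..<m'}"
    by (rule bij_betw_byWitness[where f'="\<lambda>z. z + s"]) (use h in auto)
  have "cp_col (Lch k n) x = cp_col (Lch i m') (x - s)" if x: "x \<in> {s..<s+m}" for x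
  proof -
    have le: "x \<le> s + m - 1" "s + m - 1 < n" using x sm m by auto
    have top: "cp_col (Lch k n) (s + m - 1) = i" using h by simp
    have "cp_col (Lch k n) x = (if even (s + m - 1 - x) then i else other_col i)"
      by (simp only: Lch_col_below[OF k le] top)
    moreover have "m' - 1 - (x - s) = s + m - 1 - x" using h x by auto
    ultimately show ?thesis by (simp only: Lch_col)
  qed
  moreover have "\<forall>x\<in>{s..<s+m}. \<forall>y\<in>{s..<s+m}. x \<le> y \<longleftrightarrow> x - s \<le> y - s" by auto
  ultimately show "cp_iso (cp_restr (Lch k n) {s..<s+m}) (Lch i m')"
    unfolding cp_iso_def restr_parts Lch_parts using bij by blast
qed

lemma covers_Lch: "cp_covers (Lch k n) x y \<longleftrightarrow> y < n \<and> y = x + 1"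
proof
  assume h: "cp_covers (Lch k n) x y"
  then have xy: "x < y" "y < n" by (auto simp: cp_covers_def)
  moreover have "\<not> x + 1 < y"
  proof
    assume "x + 1 < y"
    then have "x + 1 \<in> {0..<n}" "x \<le> x + 1" "x + 1 \<le> y" "x + 1 \<noteq> x" "x + 1 \<noteq> y"
      using xy by auto
    then show False using h unfolding cp_covers_def Lch_parts by blast
  qed
  ultimately show "y < n \<and> y = x + 1" by simp
next
  assume "y < n \<and> y = x + 1"
  then show "cp_covers (Lch k n) x y" unfolding cp_covers_def Lch_parts by auto
qed

text \<open>The down-set of x, written as an interval of length x + 1 starting at 0 so that
  interval_iso_Lch applies to it directly.\<close>
lemma down_Lch: "x < n \<Longrightarrow> cp_down (Lch k n) x = {0..<0+(x+1)}"
  unfolding cp_down_def Lch_parts by auto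

lemma ngraft_Lch:
  assumes i: "i \<in> {1,2}" and j: "j \<in> {1,2}" and k: "k \<in> {1,2}" and p: "1 \<le> p" and q: "1 \<le> q"
  shows "ngraft (Lch i p) (Lch j q) (Lch k n) =
         (if n = p + q \<and> k = j \<and> (even q \<longleftrightarrow> i = j) then 1 else 0)"
proof -
  let ?t = "Lch k n"
  define S where "S = {(x, y). cp_covers ?t x y \<and>
       cp_iso (cp_restr ?t (cp_down ?t x)) (Lch i p) \<and>
       cp_iso (cp_restr ?t (cp_carrier ?t - cp_down ?t x)) (Lch j q)}"
  text \<open>Cutting the edge x, x+1 splits the chain into the intervals below and above it.\<close>
  have mem: "(x, y) \<in> S \<longleftrightarrow>
      (y = x + 1 \<and> p = x + 1 \<and> n = p + q \<and> cp_col ?t x = i \<and> k = j)" for x y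
  proof (cases "y < n \<and> y = x + 1")
    case False then show ?thesis using q by (auto simp: S_def covers_Lch)
  next
    case True
    then have xn: "x < n" by auto
    have above: "cp_carrier ?t - cp_down ?t x = {(x+1)..<(x+1)+(n-(x+1))}"
      using xn by (auto simp: down_Lch)
    have "cp_iso (cp_restr ?t (cp_down ?t x)) (Lch i p) \<longleftrightarrow> p = x + 1 \<and> cp_col ?t x = i"
      unfolding down_Lch[OF xn] using interval_iso_Lch[OF k, of 0 "x+1" n] xn by simp
    moreover have "cp_iso (cp_restr ?t (cp_carrier ?t - cp_down ?t x)) (Lch j q) \<longleftrightarrow>
        q = n - (x+1) \<and> k = j"
      unfolding above using interval_iso_Lch[OF k, of "x+1" "n-(x+1)" n] xn True q
      by (auto simp: Lch_col)
    ultimately show ?thesis unfolding S_def using True q by (auto simp: covers_Lch)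
  qed
  have top_col: "cp_col ?t (p - 1) = i \<longleftrightarrow> (even q \<longleftrightarrow> i = j)" if "n = p + q" "k = j"
    using that p i j by (auto simp: Lch_col)
  have "S = (if n = p + q \<and> k = j \<and> (even q \<longleftrightarrow> i = j) then {(p-1, p)} else {})"
    using p top_col by (auto simp: mem)
  then show ?thesis unfolding ngraft_def S_def[symmetric] by simp
qed

section \<open>The bracket on basis vectors\<close>

lemma Idx_iff: "(i, n) \<in> Idx \<longleftrightarrow> i \<in> {1,2} \<and> 1 \<le> n"
  by (simp add: Idx_def)

lemma supp_delta [simp]: "supp (delta q) = {q}"
  by (auto simp: supp_def delta_def)

definition graft_coeff :: "nat \<times> nat \<Rightarrow> nat \<times> nat \<Rightarrow> nat \<times> nat \<Rightarrow> rat" where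
  "graft_coeff a b t =
     (if snd t = snd a + snd b \<and> fst t = fst b \<and> (even (snd b) \<longleftrightarrow> fst a = fst b) then 1 else 0)"

lemma ngraft_Idx:
  assumes "a \<in> Idx" "b \<in> Idx" "t \<in> Idx"
  shows "of_nat (ngraft (Lp a) (Lp b) (Lp t)) = graft_coeff a b t"
  using assms ngraft_Lch[of "fst a" "fst b" "fst t" "snd a" "snd b" "snd t"]
  by (cases a; cases b; cases t) (simp add: Lp_def graft_coeff_def Idx_iff)

lemma nbracket_delta:
  assumes "a \<in> Idx" "b \<in> Idx"
  shows "nbracket (delta a) (delta b) t =
         (if t \<in> Idx then graft_coeff a b t - graft_coeff b a t else 0)"
  using assms unfolding nbracket_def prelie_def supp_delta by (simp add: delta_def ngraft_Idx)

lemma delta_pair: "delta (j, m) (c, n) = (if c = j \<and> n = m then 1 else 0)"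
  by (auto simp: delta_def)

lemma bracket_even_even:
  assumes "i \<in> {1,2}" "j \<in> {1,2}" "k \<ge> 1" "l \<ge> 1"
  shows "nbracket (delta (i, 2*k)) (delta (j, 2*l)) = (\<lambda>_. 0)"
proof
  fix t :: "nat \<times> nat"
  have "(i, 2*k) \<in> Idx" "(j, 2*l) \<in> Idx" using assms by (simp_all add: Idx_iff)
  then show "nbracket (delta (i, 2*k)) (delta (j, 2*l)) t = 0"
    by (simp add: nbracket_delta graft_coeff_def)
qed

lemma bracket_even_odd:
  assumes "i \<in> {1,2}" "j \<in> {1,2}" "k \<ge> 1"
  shows "nbracket (delta (i, 2*k)) (delta (j, 2*l+1)) =
         (if i = j then (\<lambda>p. - delta (j, 2*(k+l)+1) p) else delta (j, 2*(k+l)+1))"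
proof
  fix t :: "nat \<times> nat"
  obtain c n where t: "t = (c, n)" by (cases t)
  have ab: "(i, 2*k) \<in> Idx" "(j, 2*l+1) \<in> Idx" and res: "(j, 2*(k+l)+1) \<in> Idx"
    using assms by (simp_all add: Idx_iff)
  show "nbracket (delta (i, 2*k)) (delta (j, 2*l+1)) t =
      (if i = j then (\<lambda>p. - delta (j, 2*(k+l)+1) p) else delta (j, 2*(k+l)+1)) t"
  proof (cases "t \<in> Idx")
    case False
    then have "t \<noteq> (j, 2*(k+l)+1)" using res by auto
    then show ?thesis using False unfolding nbracket_delta[OF ab] by (simp add: delta_def)
  next
    case True
    then show ?thesis unfolding nbracket_delta[OF ab] t by (auto simp: graft_coeff_def delta_pair)
  qed
qed

lemma bracket_odd_odd:
  assumes "i \<in> {1,2}" "j \<in> {1,2}"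
  shows "nbracket (delta (i, 2*k+1)) (delta (j, 2*l+1)) =
         (\<lambda>p. delta (j, 2*(k+l+1)) p - delta (i, 2*(k+l+1)) p)"
proof
  fix t :: "nat \<times> nat"
  obtain c n where t: "t = (c, n)" by (cases t)
  have ab: "(i, 2*k+1) \<in> Idx" "(j, 2*l+1) \<in> Idx"
    and res: "(j, 2*(k+l+1)) \<in> Idx" "(i, 2*(k+l+1)) \<in> Idx"
    using assms by (simp_all add: Idx_iff)
  show "nbracket (delta (i, 2*k+1)) (delta (j, 2*l+1)) t =
      delta (j, 2*(k+l+1)) t - delta (i, 2*(k+l+1)) t"
  proof (cases "t \<in> Idx")
    case False
    then have "t \<noteq> (j, 2*(k+l+1))" "t \<noteq> (i, 2*(k+l+1))" using res by auto
    then show ?thesis using False unfolding nbracket_delta[OF ab] by (simp add: delta_def)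
  next
    case True
    then show ?thesis unfolding nbracket_delta[OF ab] t graft_coeff_def delta_pair
      by (cases "i = j") (simp_all add: algebra_simps)
  qed
qed

lemma prelie_expand:
  "prelie x y t = (\<Sum>a\<in>supp x. \<Sum>b\<in>supp y. x a * y b * prelie (delta a) (delta b) t)"
  unfolding prelie_def[of "delta _"] supp_delta by (simp add: prelie_def delta_def)

lemma nbracket_expand:
  "nbracket x y t = (\<Sum>a\<in>supp x. \<Sum>b\<in>supp y. x a * y b * nbracket (delta a) (delta b) t)"
proof -
  have "prelie y x t = (\<Sum>b\<in>supp y. \<Sum>a\<in>supp x. y b * x a * prelie (delta b) (delta a) t)"
    by (rule prelie_expand)
  also have "\<dots> = (\<Sum>a\<in>supp x. \<Sum>b\<in>supp y. x a * y b * prelie (delta b) (delta a) t)"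
    by (subst sum.swap) (simp add: mult.commute)
  finally have "prelie y x t = \<dots>" .
  then show ?thesis unfolding nbracket_def
    by (simp add: prelie_expand[of x y t] sum_subtractf[symmetric] right_diff_distrib)
qed

lemma nF_bounded:
  assumes "x \<in> nF" obtains B :: nat where "\<And>a. a \<in> supp x \<Longrightarrow> snd a \<le> B"
proof -
  have "finite (snd ` supp x)" using assms by (simp add: nF_def)
  then obtain B where "\<forall>n\<in>snd ` supp x. n \<le> B" using finite_nat_set_iff_bounded_le by blast
  then show ?thesis using that by blast
qed

lemma nF_intro:
  assumes Idx: "supp x \<subseteq> Idx" and B: "\<And>a. a \<in> supp x \<Longrightarrow> snd a \<le> B"
  shows "x \<in> nF"
proof -
  have "supp x \<subseteq> {1,2} \<times> {..B}"
  proof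
    fix a assume "a \<in> supp x"
    then show "a \<in> {1,2} \<times> {..B}" using Idx B by (cases a) (auto simp: Idx_iff)
  qed
  then show ?thesis using Idx finite_subset unfolding nF_def by blast
qed

lemma nF_nbracket:
  assumes x: "x \<in> nF" and y: "y \<in> nF"
  shows "nbracket x y \<in> nF"
proof -
  obtain Bx where Bx: "\<And>a. a \<in> supp x \<Longrightarrow> snd a \<le> Bx" using nF_bounded[OF x] by blast
  obtain By where By: "\<And>b. b \<in> supp y \<Longrightarrow> snd b \<le> By" using nF_bounded[OF y] by blast
  text \<open>Grafting adds lengths, so the bracket only involves lengths up to Bx + By.\<close>
  have long: "nbracket x y t = 0" if "Bx + By < snd t" for t
  proof -
    have "nbracket (delta a) (delta b) t = 0" if a: "a \<in> supp x" and b: "b \<in> supp y" for a b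
    proof -
      have "a \<in> Idx" "b \<in> Idx" using a b x y by (auto simp: nF_def)
      moreover have "snd t \<noteq> snd a + snd b" using Bx[OF a] By[OF b] \<open>Bx + By < snd t\<close> by simp
      ultimately show ?thesis by (simp add: nbracket_delta graft_coeff_def add.commute)
    qed
    then show ?thesis by (simp add: nbracket_expand[of x y t])
  qed
  have "supp (nbracket x y) \<subseteq> Idx" by (auto simp: supp_def nbracket_def prelie_def)
  moreover have "snd t \<le> Bx + By" if "t \<in> supp (nbracket x y)" for t
    using that long[of t] unfolding supp_def by (metis mem_Collect_eq not_le)
  ultimately show ?thesis by (rule nF_intro)
qed

lemma nF_add: "x \<in> nF \<Longrightarrow> y \<in> nF \<Longrightarrow> (\<lambda>p. x p + y p) \<in> nF"
proof -
  have "supp (\<lambda>p. x p + y p) \<subseteq> supp x \<union> supp y" by (auto simp: supp_def)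
  then show "x \<in> nF \<Longrightarrow> y \<in> nF \<Longrightarrow> (\<lambda>p. x p + y p) \<in> nF"
    unfolding nF_def by (auto intro: finite_subset)
qed

lemma nF_scale: "x \<in> nF \<Longrightarrow> (\<lambda>p. c * x p) \<in> nF"
proof -
  have "supp (\<lambda>p. c * x p) \<subseteq> supp x" by (auto simp: supp_def)
  then show "x \<in> nF \<Longrightarrow> (\<lambda>p. c * x p) \<in> nF"
    unfolding nF_def by (auto intro: finite_subset)
qed

section \<open>The map phi in coordinates\<close>

definition phi_coords :: "(nat \<times> nat \<Rightarrow> rat) \<Rightarrow> int \<Rightarrow> rat^2^2" where
  "phi_coords x m = (\<chi> r s.
     if r = 1 then (if s = 1 then (if m \<ge> 1 then - x (1, 2*nat m) else 0)
                    else (if m \<ge> 0 then x (1, 2*nat m+1) else 0))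
     else (if s = 1 then (if m \<ge> 1 then x (2, 2*nat m - 1) else 0)
           else (if m \<ge> 1 then - x (2, 2*nat m) else 0)))"

lemma phi_coords_ent [simp]:
  "phi_coords x m $ 1 $ 1 = (if m \<ge> 1 then - x (1, 2*nat m) else 0)"
  "phi_coords x m $ 1 $ 2 = (if m \<ge> 0 then x (1, 2*nat m+1) else 0)"
  "phi_coords x m $ 2 $ 1 = (if m \<ge> 1 then x (2, 2*nat m - 1) else 0)"
  "phi_coords x m $ 2 $ 2 = (if m \<ge> 1 then - x (2, 2*nat m) else 0)"
  by (simp_all add: phi_coords_def)

lemma mat2_eq:
  "(A::rat^2^2) = B \<longleftrightarrow> A$1$1 = B$1$1 \<and> A$1$2 = B$1$2 \<and> A$2$1 = B$2$1 \<and> A$2$2 = B$2$2"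
  by (auto simp: vec_eq_iff forall_2)

lemma smat_ent [simp]: "smat c M $ a $ b = c * M $ a $ b"
  by (simp add: smat_def)

lemma Emat_ent [simp]: "Emat i j $ a $ b = (if a = i \<and> b = j then 1 else 0)"
  by (simp add: Emat_def)

lemma single_loop_ent [simp]: "single_loop d M m $ a $ b = (if m = d then M $ a $ b else 0)"
  by (simp add: single_loop_def)

lemmas gl_defs = e_gl_def f_gl_def h1_gl_def h2_gl_def

lemma phi_coords_add: "phi_coords (\<lambda>p. x p + y p) m = phi_coords x m + phi_coords y m"
  by (simp add: mat2_eq)

lemma phi_coords_scale: "phi_coords (\<lambda>p. c * x p) m = smat c (phi_coords x m)"
  by (simp add: mat2_eq)

lemma phi_coords_sum: "phi_coords (\<lambda>t. \<Sum>i\<in>I. f i t) m = (\<Sum>i\<in>I. phi_coords (f i) m)"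
  by (cases "m \<ge> 1"; cases "m \<ge> 0"; simp add: mat2_eq sum_negf)

lemma phi_coords_neg: "phi_coords (\<lambda>p. - x p) m = - phi_coords x m"
  by (simp add: mat2_eq)

lemma phi_coords_diff: "phi_coords (\<lambda>p. x p - y p) m = phi_coords x m - phi_coords y m"
  by (simp add: mat2_eq)

lemma phi_coords_zero: "phi_coords (\<lambda>p. 0) m = 0"
  by (simp add: mat2_eq)

lemma Idx_cases:
  assumes "a \<in> Idx"
  obtains (odd1) u where "a = (1, 2*u+1)" | (odd2) u where "a = (2, 2*u+1)"
    | (even1) u where "a = (1, 2*u)" "u \<ge> 1" | (even2) u where "a = (2, 2*u)" "u \<ge> 1"
proof -
  obtain i n where a: "a = (i, n)" by (cases a)
  have h: "i = 1 \<or> i = 2" "1 \<le> n" using assms a by (auto simp: Idx_iff)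
  show ?thesis
  proof (cases "even n")
    case True then obtain u where "n = 2*u" by auto
    then show ?thesis using h a even1 even2 by auto
  next
    case False then obtain u where "n = 2*u+1" using oddE by blast
    then show ?thesis using h a odd1 odd2 by auto
  qed
qed

lemma phib_coords: "a \<in> Idx \<Longrightarrow> phib a m = phi_coords (delta a) m"
  by (erule Idx_cases) (auto simp: mat2_eq phib_def delta_def gl_defs)

lemma delta_expansion:
  assumes "finite (supp x)"
  shows "(\<lambda>t. \<Sum>a\<in>supp x. x a * delta a t) = x"
proof
  fix t
  have "(\<Sum>a\<in>supp x. x a * delta a t) = (\<Sum>a\<in>supp x. if a = t then x t else 0)"
    by (intro sum.cong) (auto simp: delta_def)
  also have "\<dots> = x t" using assms by (simp add: supp_def)
  finally show "(\<Sum>a\<in>supp x. x a * delta a t) = x t" .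
qed

lemma phi_eq_coords:
  assumes x: "x \<in> nF"
  shows "phi x = phi_coords x"
proof
  fix m
  have fin: "finite (supp x)" and Idx: "\<And>a. a \<in> supp x \<Longrightarrow> a \<in> Idx"
    using x by (auto simp: nF_def)
  have "phi x m = (\<Sum>a\<in>supp x. phi_coords (\<lambda>t. x a * delta a t) m)"
    unfolding phi_def phi_coords_scale using Idx by (simp add: phib_coords)
  also have "\<dots> = phi_coords (\<lambda>t. \<Sum>a\<in>supp x. x a * delta a t) m"
    by (rule phi_coords_sum[symmetric])
  also have "\<dots> = phi_coords x m" by (simp only: delta_expansion[OF fin])
  finally show "phi x m = phi_coords x m" .
qed

lemma phi_add:
  assumes "x \<in> nF" "y \<in> nF"
  shows "phi (\<lambda>p. x p + y p) = (\<lambda>m. phi x m + phi y m)"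
  using assms nF_add[OF assms] by (simp add: phi_eq_coords phi_coords_add[abs_def])

lemma phi_scale:
  assumes "x \<in> nF"
  shows "phi (\<lambda>p. c * x p) = (\<lambda>m. smat c (phi x m))"
  using assms nF_scale[OF assms] by (simp add: phi_eq_coords phi_coords_scale[abs_def])

section \<open>phi is a bijection onto L gl_2^+\<close>

definition coords_inv :: "(int \<Rightarrow> rat^2^2) \<Rightarrow> nat \<times> nat \<Rightarrow> rat" where
  "coords_inv X p =
     (if fst p = 1 then
        (if odd (snd p) then X (int (snd p div 2)) $ 1 $ 2
         else if 2 \<le> snd p then - X (int (snd p div 2)) $ 1 $ 1 else 0)
      else if fst p = 2 then
        (if odd (snd p) then X (int (snd p div 2) + 1) $ 2 $ 1
         else if 2 \<le> snd p then - X (int (snd p div 2)) $ 2 $ 2 else 0)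
      else 0)"

lemma Lgl2plus_bounded:
  assumes "X \<in> Lgl2plus" obtains B :: nat where "\<And>m. int B < m \<Longrightarrow> X m = 0"
proof -
  have fin: "finite (supp X)" using assms by (simp add: Lgl2plus_def Lgl2_def)
  define B where "B = nat (Max (insert 0 (supp X)))"
  have "X m = 0" if "int B < m" for m
  proof (rule ccontr)
    assume "X m \<noteq> 0"
    then have "m \<le> Max (insert 0 (supp X))" using fin by (simp add: supp_def)
    then show False using that unfolding B_def by linarith
  qed
  then show ?thesis using that by blast
qed

lemma phi_coords_Lgl2plus:
  assumes x: "x \<in> nF"
  shows "phi_coords x \<in> Lgl2plus"
proof -
  obtain B where B: "\<And>a. a \<in> supp x \<Longrightarrow> snd a \<le> B" using nF_bounded[OF x] by blast
  have long: "x p = 0" if "B < snd p" for p using B[of p] that by (force simp: supp_def)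
  have neg: "phi_coords x m = 0" if "m < 0" for m using that by (simp add: mat2_eq)
  have "phi_coords x m = 0" if "int B < m" for m
    using that by (simp add: mat2_eq long)
  then have "supp (phi_coords x) \<subseteq> {0..int B}"
    using neg by (force simp: supp_def)
  then have "finite (supp (phi_coords x))" using finite_subset by blast
  moreover have "phi_coords x 0 = smat (x (1,1)) e_gl" by (simp add: mat2_eq gl_defs)
  ultimately show ?thesis unfolding Lgl2plus_def Lgl2_def using neg by auto
qed

lemma coords_inv_nF:
  assumes X: "X \<in> Lgl2plus"
  shows "coords_inv X \<in> nF"
proof -
  obtain B where B: "\<And>m. int B < m \<Longrightarrow> X m = 0" using Lgl2plus_bounded[OF X] by blast
  have "supp (coords_inv X) \<subseteq> Idx"
  proof
    fix p assume "p \<in> supp (coords_inv X)"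
    then have "coords_inv X p \<noteq> 0" by (simp add: supp_def)
    then show "p \<in> Idx"
      by (cases p) (auto simp: coords_inv_def Idx_iff Suc_le_eq odd_pos split: if_splits)
  qed
  moreover have "snd p \<le> 2 * B + 2" if "p \<in> supp (coords_inv X)" for p
  proof (rule ccontr)
    assume "\<not> snd p \<le> 2 * B + 2"
    then have "int B < int (snd p div 2)" by simp
    then have "coords_inv X p = 0" by (simp add: coords_inv_def B)
    then show False using that by (simp add: supp_def)
  qed
  ultimately show ?thesis by (rule nF_intro)
qed

lemma phi_coords_inv:
  assumes X: "X \<in> Lgl2plus"
  shows "phi_coords (coords_inv X) = X"
proof
  fix m
  have neg: "m < 0 \<Longrightarrow> X m = 0" and X0: "\<exists>c. X 0 = smat c e_gl"
    using X by (auto simp: Lgl2plus_def)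
  consider "m < 0" | "m = 0" | "1 \<le> m" by linarith
  then show "phi_coords (coords_inv X) m = X m"
  proof cases
    case 1 then show ?thesis using neg by (simp add: mat2_eq)
  next
    case 2 then show ?thesis using X0 by (auto simp: mat2_eq gl_defs coords_inv_def)
  next
    case 3
    then have "odd (2 * nat m - 1)" "int ((2 * nat m - 1) div 2) + 1 = m" "int (nat m) = m"
      by auto
    then show ?thesis using 3 by (simp add: mat2_eq coords_inv_def)
  qed
qed

lemma coords_inv_phi:
  assumes x: "x \<in> nF"
  shows "coords_inv (phi_coords x) = x"
proof
  fix p
  show "coords_inv (phi_coords x) p = x p"
  proof (cases "p \<in> Idx")
    case True then show ?thesis
      by (cases rule: Idx_cases) (simp_all add: coords_inv_def nat_add_distrib)
  next
    case False
    then have "x p = 0" using x by (auto simp: nF_def supp_def)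
    moreover have "coords_inv X p = 0" for X using False
      by (cases p) (auto simp: coords_inv_def Idx_iff Suc_le_eq odd_pos)
    ultimately show ?thesis by simp
  qed
qed

lemma phi_bij: "bij_betw phi nF Lgl2plus"
proof (rule bij_betw_byWitness[where f' = coords_inv])
  show "\<forall>x\<in>nF. coords_inv (phi x) = x" by (simp add: phi_eq_coords coords_inv_phi)
  show "\<forall>X\<in>Lgl2plus. phi (coords_inv X) = X"
    by (simp add: coords_inv_nF phi_eq_coords phi_coords_inv)
  show "phi ` nF \<subseteq> Lgl2plus" by (auto simp: phi_eq_coords phi_coords_Lgl2plus)
  show "coords_inv ` Lgl2plus \<subseteq> nF" by (auto simp: coords_inv_nF)
qed

section \<open>phi is a Lie algebra homomorphism\<close>

lemma mmult_ent: "((A::rat^2^2) ** B) $ i $ j = A$i$1 * B$1$j + A$i$2 * B$2$j"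
  by (simp add: matrix_matrix_mult_def sum_2)

lemma Lbracket_sup:
  assumes "finite P" "supp X \<subseteq> P"
  shows "Lbracket X Y m = (\<Sum>p\<in>P. X p ** Y (m - p) - Y (m - p) ** X p)"
  unfolding Lbracket_def
  by (rule sum.mono_neutral_left) (use assms in \<open>auto simp: supp_def\<close>)

lemma single_loop_bracket:
  "Lbracket (single_loop d A) (single_loop d' B) m = (if m = d + d' then A ** B - B ** A else 0)"
proof -
  have "supp (single_loop d A) \<subseteq> {d}" by (auto simp: supp_def single_loop_def)
  then show ?thesis by (subst Lbracket_sup) (auto simp: single_loop_def)
qed

lemma nbracket_antisym: "nbracket x y = (\<lambda>t. - nbracket y x t)"
  by (simp add: nbracket_def)

lemma hom_odd_odd:
  assumes "i \<in> {1,2}" "j \<in> {1,2}"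
  shows "phi_coords (nbracket (delta (i, 2*k+1)) (delta (j, 2*l+1))) m
         = Lbracket (phib (i, 2*k+1)) (phib (j, 2*l+1)) m"
  using assms unfolding bracket_odd_odd[OF assms] phi_coords_diff
  by (auto simp: phib_coords[symmetric] Idx_iff phib_def single_loop_bracket mat2_eq
      mmult_ent gl_defs)

lemma hom_even_odd:
  assumes "i \<in> {1,2}" "j \<in> {1,2}" "1 \<le> k"
  shows "phi_coords (nbracket (delta (i, 2*k)) (delta (j, 2*l+1))) m
         = Lbracket (phib (i, 2*k)) (phib (j, 2*l+1)) m"
  using assms unfolding bracket_even_odd[OF assms]
  by (elim insertE emptyE; simp add: phi_coords_neg phib_coords[symmetric] Idx_iff phib_def
      single_loop_bracket mat2_eq mmult_ent gl_defs)

lemma hom_odd_even: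
  assumes "i \<in> {1,2}" "j \<in> {1,2}" "1 \<le> l"
  shows "phi_coords (nbracket (delta (i, 2*k+1)) (delta (j, 2*l))) m
         = Lbracket (phib (i, 2*k+1)) (phib (j, 2*l)) m"
  using assms
  unfolding nbracket_antisym[of "delta (i, 2*k+1)"] bracket_even_odd[OF assms(2,1,3)]
  by (elim insertE emptyE; simp add: phi_coords_neg phib_coords[symmetric] Idx_iff phib_def
      single_loop_bracket mat2_eq mmult_ent gl_defs)

lemma hom_even_even:
  assumes "i \<in> {1,2}" "j \<in> {1,2}" "1 \<le> k" "1 \<le> l"
  shows "phi_coords (nbracket (delta (i, 2*k)) (delta (j, 2*l))) m
         = Lbracket (phib (i, 2*k)) (phib (j, 2*l)) m"
  using assms unfolding bracket_even_even[OF assms]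
  by (auto simp: phi_coords_zero phib_def single_loop_bracket mat2_eq mmult_ent gl_defs)

lemma hom_basis:
  assumes "a \<in> Idx" "b \<in> Idx"
  shows "phi_coords (nbracket (delta a) (delta b)) m = Lbracket (phib a) (phib b) m"
  using assms
  by (elim Idx_cases; clarify) (rule hom_odd_odd hom_even_odd hom_odd_even hom_even_even; simp)+

lemma smat_sum: "smat c (\<Sum>i\<in>I. A i) = (\<Sum>i\<in>I. smat c (A i))"
  by (simp add: mat2_eq sum_distrib_left)

lemma mmult_sum_left: "(\<Sum>i\<in>I. (A i :: rat^2^2)) ** (B::rat^2^2) = (\<Sum>i\<in>I. A i ** B)"
  by (simp add: mat2_eq mmult_ent sum_distrib_right sum.distrib)

lemma mmult_sum_right: "(B::rat^2^2) ** (\<Sum>i\<in>I. (A i :: rat^2^2)) = (\<Sum>i\<in>I. B ** A i)"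
  by (simp add: mat2_eq mmult_ent sum_distrib_left sum.distrib)

lemma smat_mmult: "smat c A ** (B::rat^2^2) = smat c (A ** B)" "A ** smat c B = smat c (A ** B)"
  by (simp_all add: mat2_eq mmult_ent algebra_simps)

lemma smat_smat: "smat c (smat d A) = smat (c * d) A"
  by (simp add: mat2_eq)

lemma smat_diff: "smat c (A - B) = smat c A - smat c B"
  by (simp add: mat2_eq algebra_simps)

lemma smat_zero: "smat c 0 = 0"
  by (simp add: mat2_eq)

lemma commutator_expand:
  "(\<Sum>a\<in>A. smat (c a) (X a)) ** (\<Sum>b\<in>B. smat (d b) (Y b))
     - (\<Sum>b\<in>B. smat (d b) (Y b)) ** (\<Sum>a\<in>A. smat (c a) (X a))
   = (\<Sum>a\<in>A. \<Sum>b\<in>B. smat (c a * d b) (X a ** Y b - Y b ** X a))"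
proof -
  have XY: "(\<Sum>a\<in>A. smat (c a) (X a)) ** (\<Sum>b\<in>B. smat (d b) (Y b))
      = (\<Sum>a\<in>A. \<Sum>b\<in>B. smat (c a * d b) (X a ** Y b))"
    by (simp only: mmult_sum_left)
      (simp add: mmult_sum_right smat_mmult smat_smat smat_sum mult.commute)
  have YX: "(\<Sum>b\<in>B. smat (d b) (Y b)) ** (\<Sum>a\<in>A. smat (c a) (X a))
      = (\<Sum>a\<in>A. \<Sum>b\<in>B. smat (c a * d b) (Y b ** X a))"
    by (simp only: mmult_sum_right)
      (simp add: mmult_sum_left smat_mmult smat_smat smat_sum mult.commute)
  show ?thesis unfolding XY YX by (simp add: sum_subtractf[symmetric] smat_diff)
qed

lemma phib_supp: "a \<in> Idx \<Longrightarrow> supp (phib a) \<subseteq> {0..int (snd a)}"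
  by (erule Idx_cases) (auto simp: phib_def supp_def single_loop_def)

lemma phi_nbracket_expand:
  assumes x: "x \<in> nF" and y: "y \<in> nF"
  shows "phi (nbracket x y) m =
    (\<Sum>a\<in>supp x. \<Sum>b\<in>supp y. smat (x a * y b) (Lbracket (phib a) (phib b) m))"
proof -
  have "phi (nbracket x y) m =
      phi_coords (\<lambda>t. \<Sum>a\<in>supp x. \<Sum>b\<in>supp y. x a * y b * nbracket (delta a) (delta b) t) m"
    unfolding phi_eq_coords[OF nF_nbracket[OF x y]]
    by (rule arg_cong[where f = "\<lambda>z. phi_coords z m"]) (rule ext, rule nbracket_expand)
  also have "\<dots> = (\<Sum>a\<in>supp x. \<Sum>b\<in>supp y.
      smat (x a * y b) (phi_coords (nbracket (delta a) (delta b)) m))"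
    unfolding phi_coords_sum phi_coords_scale ..
  also have "\<dots> = (\<Sum>a\<in>supp x. \<Sum>b\<in>supp y. smat (x a * y b) (Lbracket (phib a) (phib b) m))"
    using x y by (intro sum.cong refl) (simp add: hom_basis nF_def subset_eq)
  finally show ?thesis .
qed

lemma Lbracket_phi_expand:
  assumes x: "x \<in> nF" and y: "y \<in> nF"
  shows "Lbracket (phi x) (phi y) m =
    (\<Sum>a\<in>supp x. \<Sum>b\<in>supp y. smat (x a * y b) (Lbracket (phib a) (phib b) m))"
proof -
  obtain B where B: "\<And>a. a \<in> supp x \<Longrightarrow> snd a \<le> B" using nF_bounded[OF x] by blast
  define P where "P = {0..int B}"
  have fin: "finite P" by (simp add: P_def)
  have supp_phib: "supp (phib a) \<subseteq> P" if a: "a \<in> supp x" for a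
  proof -
    have "a \<in> Idx" using a x by (auto simp: nF_def)
    then show ?thesis using phib_supp B[OF a] unfolding P_def by fastforce
  qed
  have "supp (phi x) \<subseteq> P"
  proof
    fix p assume p: "p \<in> supp (phi x)"
    show "p \<in> P"
    proof (rule ccontr)
      assume "p \<notin> P"
      then have "phib a p = 0" if "a \<in> supp x" for a
        using supp_phib[OF that] by (auto simp: supp_def)
      then have "phi x p = 0" by (simp add: phi_def smat_zero)
      then show False using p by (simp add: supp_def)
    qed
  qed
  then have "Lbracket (phi x) (phi y) m =
      (\<Sum>p\<in>P. phi x p ** phi y (m - p) - phi y (m - p) ** phi x p)"
    by (rule Lbracket_sup[OF fin])
  also have "\<dots> = (\<Sum>p\<in>P. \<Sum>a\<in>supp x. \<Sum>b\<in>supp y.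
      smat (x a * y b) (phib a p ** phib b (m - p) - phib b (m - p) ** phib a p))"
    unfolding phi_def by (simp only: commutator_expand)
  also have "\<dots> = (\<Sum>a\<in>supp x. \<Sum>b\<in>supp y. smat (x a * y b)
      (\<Sum>p\<in>P. phib a p ** phib b (m - p) - phib b (m - p) ** phib a p))"
    by (simp add: smat_sum sum.swap[of _ P])
  also have "\<dots> = (\<Sum>a\<in>supp x. \<Sum>b\<in>supp y. smat (x a * y b) (Lbracket (phib a) (phib b) m))"
    by (intro sum.cong refl) (simp add: Lbracket_sup[OF fin supp_phib])
  finally show ?thesis .
qed

lemma phi_hom:
  assumes "x \<in> nF" "y \<in> nF"
  shows "phi (nbracket x y) = Lbracket (phi x) (phi y)"
proof
  fix m
  show "phi (nbracket x y) m = Lbracket (phi x) (phi y) m"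
    unfolding phi_nbracket_expand[OF assms] Lbracket_phi_expand[OF assms] ..
qed

theorem mainTheorem5:
  shows "(\<forall>i\<in>{1,2}. \<forall>j\<in>{1,2}. \<forall>k\<ge>1. \<forall>l\<ge>1.
            nbracket (delta (i, 2*k)) (delta (j, 2*l)) = (\<lambda>_. 0))
    \<and> (\<forall>i\<in>{1,2}. \<forall>j\<in>{1,2}. \<forall>k\<ge>1. \<forall>l.
            nbracket (delta (i, 2*k)) (delta (j, 2*l+1)) =
              (if i = j then (\<lambda>p. - delta (j, 2*(k+l)+1) p) else delta (j, 2*(k+l)+1)))
    \<and> (\<forall>i\<in>{1,2}. \<forall>j\<in>{1,2}. \<forall>k l.
            nbracket (delta (i, 2*k+1)) (delta (j, 2*l+1)) =
              (\<lambda>p. delta (j, 2*(k+l+1)) p - delta (i, 2*(k+l+1)) p))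
    \<and> (\<forall>x\<in>nF. \<forall>y\<in>nF. phi (\<lambda>p. x p + y p) = (\<lambda>m. phi x m + phi y m))
    \<and> (\<forall>c. \<forall>x\<in>nF. phi (\<lambda>p. c * x p) = (\<lambda>m. smat c (phi x m)))
    \<and> bij_betw phi nF Lgl2plus
    \<and> (\<forall>x\<in>nF. \<forall>y\<in>nF. phi (nbracket x y) = Lbracket (phi x) (phi y))"
proof (intro conjI)
  show "\<forall>i\<in>{1,2}. \<forall>j\<in>{1,2}. \<forall>k\<ge>1. \<forall>l\<ge>1.
            nbracket (delta (i, 2*k)) (delta (j, 2*l)) = (\<lambda>_. 0)"
    using bracket_even_even by blast
  show "\<forall>i\<in>{1,2}. \<forall>j\<in>{1,2}. \<forall>k\<ge>1. \<forall>l.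
            nbracket (delta (i, 2*k)) (delta (j, 2*l+1)) =
              (if i = j then (\<lambda>p. - delta (j, 2*(k+l)+1) p) else delta (j, 2*(k+l)+1))"
    using bracket_even_odd by blast
  show "\<forall>i\<in>{1,2}. \<forall>j\<in>{1,2}. \<forall>k l.
            nbracket (delta (i, 2*k+1)) (delta (j, 2*l+1)) =
              (\<lambda>p. delta (j, 2*(k+l+1)) p - delta (i, 2*(k+l+1)) p)"
    using bracket_odd_odd by blast
qed (use phi_add phi_scale phi_bij phi_hom in auto)

end
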